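(* Let $X\subset A^+$ be a thin maximal bifix code and let $x\in A^{\mathbb N}$ be an $X$-stable infinite word. If $\mathrm{Card}(X\cap F(x))\le d_{F(x)}(X)$, then $x$ is ultimately periodic.
   Context: $A$ is a finite alphabet. A bifix code is a set of nonempty words none of which is a proper prefix or proper suffix of another; a maximal bifix code is one not properly contained in another bifix code of $A^*$; it is thin if some word of $A^*$ is not a factor of any of its words. For an infinite word $y$, $F(y)$ is its set of finite factors. A parse of $w$ with respect to $X$ is a triple $(v,z,u)$ with $w=vzu$, $v$ having no suffix in $X$, $z\in X^*$, $u$ having no prefix in $X$; $\delta_X(w)$ is their number, and $d_{F(y)}(X)=\max_{w\in F(y)}\delta_X(w)$. An infinite word $x$ is $X$-stable if $d_{F(y)}(X)=d_{F(x)}(X)$ for every suffix $y$ of $x$ (i.e. every $y$ with $x=uy$, $u\in A^*$). $x=a_0a_1\cdots$ is ultimately periodic if there is $n\ge1$ with $a_{i+n}=a_i$ for all sufficiently large $i$. *)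

theory Defs
  imports Main "HOL-Library.Sublist" "HOL-Library.Extended_Nat"
begin

definition bifix_code :: "'a set \<Rightarrow> 'a list set \<Rightarrow> bool" where
  "bifix_code A X \<longleftrightarrow> X \<subseteq> lists A \<and> [] \<notin> X \<and>
     (\<forall>x\<in>X. \<forall>y\<in>X. \<not> strict_prefix x y \<and> \<not> strict_suffix x y)"

definition maximal_bifix_code :: "'a set \<Rightarrow> 'a list set \<Rightarrow> bool" where
  "maximal_bifix_code A X \<longleftrightarrow> bifix_code A X \<and>
     (\<forall>Y. bifix_code A Y \<and> X \<subseteq> Y \<longrightarrow> Y = X)"

definition thin :: "'a set \<Rightarrow> 'a list set \<Rightarrow> bool" where
  "thin A X \<longleftrightarrow> (\<exists>w\<in>lists A. \<forall>x\<in>X. \<not> sublist w x)"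

definition star_words :: "'a list set \<Rightarrow> 'a list set" where
  "star_words X = {concat ws | ws. set ws \<subseteq> X}"

definition factors :: "(nat \<Rightarrow> 'a) \<Rightarrow> 'a list set" where
  "factors y = {map y [i..<i+n] | i n. True}"

definition parses :: "'a list set \<Rightarrow> 'a list \<Rightarrow> ('a list \<times> 'a list \<times> 'a list) set" where
  "parses X w = {(v, z, u). w = v @ z @ u \<and> (\<forall>s. suffix s v \<longrightarrow> s \<notin> X)
      \<and> z \<in> star_words X \<and> (\<forall>p. prefix p u \<longrightarrow> p \<notin> X)}"

definition delta :: "'a list set \<Rightarrow> 'a list \<Rightarrow> nat" where
  "delta X w = card (parses X w)"

text \<open>d_{F(y)}(X) as a supremum in the extended naturals (max when attained).\<close>
definition degF :: "'a list set \<Rightarrow> (nat \<Rightarrow> 'a) \<Rightarrow> enat" where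
  "degF X y = (SUP w\<in>factors y. enat (delta X w))"

definition ecard :: "'b set \<Rightarrow> enat" where
  "ecard S = (if finite S then enat (card S) else \<infinity>)"

definition X_stable :: "'a list set \<Rightarrow> (nat \<Rightarrow> 'a) \<Rightarrow> bool" where
  "X_stable X x \<longleftrightarrow> (\<forall>k. degF X (\<lambda>i. x (i + k)) = degF X x)"

definition ultimately_periodic :: "(nat \<Rightarrow> 'a) \<Rightarrow> bool" where
  "ultimately_periodic x \<longleftrightarrow> (\<exists>n\<ge>1. \<exists>N. \<forall>i\<ge>N. x (i + n) = x i)"

end

theory Submission
  imports Defs
begin

(* Mark an "arc" j \<rightarrow> p whenever the factor x[j..p) lies in X.  Since X is a prefix code
   and a suffix code, at most one arc leaves and at most one arc enters each position.
   (1) For finite words y, the parses of y are counted by positions of y not entered by an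
       X-factor of y, and this number equals the number of positions not left by one.
       Thinness with maximality gives a word w such that every word containing w has a
       suffix in X; hence a word has at most |w| + 1 unentered positions.
   (2) Consequently all but finitely many positions of x are entered by an arc, and then the
       number of arcs crossing a position is non-increasing, so it is eventually a constant M
       and every later position is also left by an arc.  It bounds \<delta>_X of every later factor,
       so by X-stability d_F(x)(X) \<le> M.
   (3) If x is not ultimately periodic, two equal windows followed by different letters turn
       the M crossing arcs into M branching nodes of the prefix code X \<inter> F(x), which
       therefore has at least M + 1 elements, contradicting the hypothesis.
   Section by section: bifix codes and the thin-maximal suffix property, counting unentered
   positions, branching nodes of prefix codes, segments of infinite words, the arc
   structure of x (a locale), and finally the theorem. *)

section \<open>Bifix codes and the suffix property of thin maximal codes\<close>

lemma bifix_code_prefix_eq: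
  assumes "bifix_code A X" "u \<in> X" "v \<in> X" "prefix u v" shows "u = v"
  using assms unfolding bifix_code_def strict_prefix_def by auto

lemma bifix_code_suffix_eq:
  assumes "bifix_code A X" "u \<in> X" "v \<in> X" "suffix u v" shows "u = v"
  using assms unfolding bifix_code_def strict_suffix_def by auto

lemma maximal_bifix_code_nonempty:
  assumes "maximal_bifix_code A X" "a \<in> A" shows "X \<noteq> {}"
proof
  assume "X = {}"
  moreover have "bifix_code A {[a]}"
    using assms(2) by (auto simp: bifix_code_def strict_prefix_def strict_suffix_def)
  ultimately show False using assms(1) unfolding maximal_bifix_code_def by blast
qed

text \<open>If \<open>w\<close> is not a factor of any word of \<open>X\<close>, a word \<open>y\<close> containing \<open>w\<close> is comparable with
  no word of \<open>X\<close>; by maximality, \<open>y\<close> must then have a prefix or a suffix in \<open>X\<close>.\<close>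
lemma forbidden_factor_prefix_or_suffix:
  assumes mb: "maximal_bifix_code A X" and w: "\<forall>z\<in>X. \<not> sublist w z" "w \<noteq> []"
    and y: "y \<in> lists A" "sublist w y"
  shows "(\<exists>p. prefix p y \<and> p \<in> X) \<or> (\<exists>s. suffix s y \<and> s \<in> X)"
proof (rule ccontr)
  assume none: "\<not> ?thesis"
  have "\<not> prefix y z \<and> \<not> suffix y z" if "z \<in> X" for z
  proof -
    have "\<not> sublist y z"
      using w(1) y(2) that by (meson sublist_order.order.trans)
    then show ?thesis using prefix_imp_sublist suffix_imp_sublist by blast
  qed
  moreover have "y \<noteq> []" using y(2) w(2) by auto
  ultimately have "bifix_code A (insert y X)"
    using mb y(1) none
    unfolding maximal_bifix_code_def bifix_code_def strict_prefix_def strict_suffix_def by auto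
  then have "y \<in> X" using mb unfolding maximal_bifix_code_def by blast
  then show False using none by auto
qed

text \<open>Extending to the left a word containing \<open>w\<close> that has no suffix in \<open>X\<close> creates no suffix in
  \<open>X\<close>: the new suffixes contain \<open>w\<close>.\<close>
lemma no_X_suffix_extend:
  assumes w: "\<forall>z\<in>X. \<not> sublist w z" and wv: "sublist w v"
    and v: "\<forall>s. suffix s v \<longrightarrow> s \<notin> X"
  shows "\<forall>s. suffix s (u @ v) \<longrightarrow> s \<notin> X"
proof (intro allI impI)
  fix s assume "suffix s (u @ v)"
  then consider "suffix s v" | s' where "s = s' @ v" unfolding suffix_append by blast
  then show "s \<notin> X"
  proof cases
    case 1 then show ?thesis using v by blast
  next
    case 2
    then have "sublist v s" by simp
    then have "sublist w s" using wv by (meson sublist_order.order.trans)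
    then show ?thesis using w by blast
  qed
qed

lemma take_concat_replicate:
  assumes "k \<le> N"
  shows "take (k * length v) (concat (replicate N v)) = concat (replicate k v)"
proof -
  have "concat (replicate N v) = concat (replicate k v) @ concat (replicate (N - k) v)"
    using assms by (metis concat_append le_add_diff_inverse replicate_add)
  then show ?thesis by (simp add: length_concat sum_list_replicate)
qed

lemma power_X_factor_at:
  assumes mb: "maximal_bifix_code A X" and w: "\<forall>z\<in>X. \<not> sublist w z" "w \<noteq> []"
    and v: "v \<in> lists A" "sublist w v" "\<forall>s. suffix s v \<longrightarrow> s \<notin> X"
    and i: "i \<le> k * length v"
  shows "\<exists>t. 0 < t \<and> i + t < Suc k * length v
           \<and> take t (drop i (concat (replicate (Suc k) v))) \<in> X"
proof -
  define Y where "Y = concat (replicate (Suc k) v)"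
  have Y: "Y = concat (replicate k v) @ v"
    unfolding Y_def by (simp add: replicate_append_same[symmetric])
  have lY: "length Y = Suc k * length v"
    unfolding Y_def by (simp add: length_concat sum_list_replicate)
  have d: "drop i Y = drop i (concat (replicate k v)) @ v"
    using i unfolding Y by (simp add: length_concat sum_list_replicate)
  have nosuf: "\<forall>s. suffix s (drop i Y) \<longrightarrow> s \<notin> X"
    unfolding d using no_X_suffix_extend[OF w(1) v(2,3)] by blast
  have "drop i Y \<in> lists A"
    using v(1) unfolding Y_def by (auto simp: in_lists_conv_set dest: in_set_dropD)
  moreover have "sublist w (drop i Y)" unfolding d using v(2) by (meson sublist_append_leftI sublist_order.order.trans)
  ultimately obtain p where p: "prefix p (drop i Y)" "p \<in> X"
    using forbidden_factor_prefix_or_suffix[OF mb w] nosuf by blast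
  have "p \<noteq> drop i Y" using p nosuf by auto
  then have "length p < length (drop i Y)" using p(1) by (metis prefix_length_less strict_prefixI)
  moreover have "p \<noteq> []" using p(2) mb by (auto simp: maximal_bifix_code_def bifix_code_def)
  moreover have "take (length p) (drop i Y) = p" using p(1) by (metis append_eq_conv_conj prefixE)
  ultimately show ?thesis using lY p(2) unfolding Y_def[symmetric] by (intro exI[of _ "length p"]) auto
qed

lemma no_injection_into_non_multiples:
  assumes npos: "0 < n" and inj: "inj_on e {0..n*n}"
    and range: "e ` {0..n*n} \<subseteq> {1..<Suc n * n} - (\<lambda>k. k * n) ` {1..<Suc n}"
  shows False
proof -
  have "card {0..n*n} \<le> card ({1..<Suc n * n} - (\<lambda>k. k * n) ` {1..<Suc n})"
    using card_inj_on_le[OF inj range] by simp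
  moreover have "card ((\<lambda>k. k * n) ` {1..<Suc n}) = n"
    using npos by (subst card_image) (auto simp: inj_on_def)
  moreover have "(\<lambda>k. k * n) ` {1..<Suc n} \<subseteq> {1..<Suc n * n}"
  proof (rule image_subsetI)
    fix k assume "k \<in> {1..<Suc n}"
    then have "1 * n \<le> k * n" "k * n \<le> n * n" by (simp_all add: mult_le_mono1)
    moreover have "Suc n * n = n + n * n" by simp
    ultimately show "k * n \<in> {1..<Suc n * n}" unfolding atLeastLessThan_iff using npos by linarith
  qed
  ultimately have "n * n + 1 \<le> Suc n * n - 1 - n" by (simp add: card_Diff_subset)
  then show False using npos by simp
qed

text \<open>Otherwise, in \<open>v\<^sup>n\<^sup>+\<^sup>1\<close> (\<open>n = |v|\<close>) the \<open>n\<^sup>2 + 1\<close> positions \<open>i \<le> n\<^sup>2\<close> start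
  \<open>X\<close>-factors with pairwise distinct ends (suffix code), none of which is a multiple of \<open>n\<close>;
  there are too few such end positions.\<close>
lemma forbidden_factor_suffix:
  assumes mb: "maximal_bifix_code A X" and w: "\<forall>z\<in>X. \<not> sublist w z" "w \<noteq> []"
    and v: "v \<in> lists A" "sublist w v"
  shows "\<exists>s. suffix s v \<and> s \<in> X"
proof (rule ccontr)
  assume "\<not> ?thesis"
  then have nosuf: "\<forall>s. suffix s v \<longrightarrow> s \<notin> X" by auto
  have bc: "bifix_code A X" using mb by (simp add: maximal_bifix_code_def)
  define n where "n = length v"
  have npos: "0 < n" using v(2) w(2) unfolding n_def by (metis length_greater_0_conv sublist_Nil_right)
  define Y where "Y = concat (replicate (Suc n) v)"
  have lY: "length Y = Suc n * n" unfolding Y_def n_def by (simp add: length_concat sum_list_replicate)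
  obtain t where t: "\<And>i. i \<le> n * n \<Longrightarrow> 0 < t i \<and> i + t i < Suc n * n \<and> take (t i) (drop i Y) \<in> X"
    using power_X_factor_at[OF mb w v nosuf, of _ n] unfolding Y_def n_def by metis
  define e where "e i = i + t i" for i
  have end_suffix: "suffix (take (t i) (drop i Y)) (take (e i) Y)" for i
    unfolding e_def by (simp add: take_add suffix_def)
  have "inj_on e {0..n*n}"
  proof (rule inj_onI)
    fix i j assume i: "i \<in> {0..n*n}" and j: "j \<in> {0..n*n}" and eq: "e i = e j"
    have "suffix (take (t i) (drop i Y)) (take (t j) (drop j Y))
        \<or> suffix (take (t j) (drop j Y)) (take (t i) (drop i Y))"
      using end_suffix[of i] end_suffix[of j] eq suffix_same_cases by metis
    then have "take (t i) (drop i Y) = take (t j) (drop j Y)"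
      using t[of i] t[of j] i j bifix_code_suffix_eq[OF bc] by (auto intro: sym)
    moreover have "length (take (t k) (drop k Y)) = t k" if "k \<le> n * n" for k
      using t[OF that] lY by (simp add: min_def, linarith)
    ultimately have "t i = t j" using i j by (metis atLeastAtMost_iff)
    then show "i = j" using eq unfolding e_def by simp
  qed
  moreover have "e ` {0..n*n} \<subseteq> {1..<Suc n * n} - (\<lambda>k. k * n) ` {1..<Suc n}"
  proof
    fix y assume "y \<in> e ` {0..n*n}"
    then obtain i where i: "i \<le> n * n" and y: "y = e i" by auto
    have r: "1 \<le> y" "y < Suc n * n" using t[OF i] y unfolding e_def by auto
    have notmult: "y \<noteq> k * n" if k: "k \<in> {1..<Suc n}" for k
    proof
      assume yk: "y = k * n"
      text \<open>The prefix of \<open>Y\<close> ending at \<open>y\<close> is a power of \<open>v\<close>, so it has no suffix in \<open>X\<close>.\<close>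
      have "take (e i) Y = concat (replicate k v)"
        using take_concat_replicate[of k "Suc n" v] k yk y by (simp add: Y_def n_def)
      also have "\<dots> = concat (replicate (k - 1) v) @ v"
        using k by (cases k) (simp_all add: replicate_append_same[symmetric])
      finally have "take (e i) Y = concat (replicate (k - 1) v) @ v" .
      then show False
        using end_suffix[of i] t[OF i] no_X_suffix_extend[OF w(1) v(2) nosuf] by metis
    qed
    then have "y \<notin> (\<lambda>k. k * n) ` {1..<Suc n}" by blast
    then show "y \<in> {1..<Suc n * n} - (\<lambda>k. k * n) ` {1..<Suc n}" using r by simp
  qed
  ultimately show False using no_injection_into_non_multiples npos by blast
qed

section \<open>Unentered positions of finite words\<close>

definition occurrences :: "'a list set \<Rightarrow> 'a list \<Rightarrow> (nat \<times> nat) set" where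
  "occurrences X y = {(j, t). j < t \<and> t \<le> length y \<and> drop j (take t y) \<in> X}"

definition unentered :: "'a list set \<Rightarrow> 'a list \<Rightarrow> nat set" where
  "unentered X y = {p. p \<le> length y \<and> \<not> (\<exists>j<p. drop j (take p y) \<in> X)}"

definition unexited :: "'a list set \<Rightarrow> 'a list \<Rightarrow> nat set" where
  "unexited X y = {q. q \<le> length y \<and> \<not> (\<exists>t. q < t \<and> t \<le> length y \<and> drop q (take t y) \<in> X)}"

lemma finite_occurrences: "finite (occurrences X y)"
  by (rule finite_subset[of _ "{0..length y} \<times> {0..length y}"]) (auto simp: occurrences_def)

lemma inj_on_end_occurrences:
  assumes bc: "bifix_code A X" shows "inj_on snd (occurrences X y)"
proof (rule inj_onI)
  fix a b assume a: "a \<in> occurrences X y" and b: "b \<in> occurrences X y" and e: "snd a = snd b"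
  obtain j t j' where ab: "a = (j, t)" "b = (j', t)" using e by (metis prod.collapse)
  have X1: "drop j (take t y) \<in> X" and X2: "drop j' (take t y) \<in> X"
    using a b ab by (auto simp: occurrences_def)
  have "suffix (drop j' (take t y)) (drop j (take t y)) \<or> suffix (drop j (take t y)) (drop j' (take t y))"
    by (metis nat_le_linear suffix_drop drop_drop le_add_diff_inverse2)
  then have "drop j (take t y) = drop j' (take t y)"
    using bifix_code_suffix_eq[OF bc X1 X2] bifix_code_suffix_eq[OF bc X2 X1] by auto
  then have "j = j'" using a b ab by (auto simp: occurrences_def dest: arg_cong[of _ _ length])
  then show "a = b" using ab by simp
qed

lemma inj_on_start_occurrences:
  assumes bc: "bifix_code A X" shows "inj_on fst (occurrences X y)"
proof (rule inj_onI)
  fix a b assume a: "a \<in> occurrences X y" and b: "b \<in> occurrences X y" and e: "fst a = fst b"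
  obtain j t t' where ab: "a = (j, t)" "b = (j, t')" using e by (metis prod.collapse)
  have X1: "drop j (take t y) \<in> X" and X2: "drop j (take t' y) \<in> X"
    using a b ab by (auto simp: occurrences_def)
  have "prefix (drop j (take t y)) (drop j (take t' y)) \<or> prefix (drop j (take t' y)) (drop j (take t y))"
    by (metis nat_le_linear take_is_prefix min.absorb1 take_take prefix_def drop_append prefix_order.eq_iff)
  then have "drop j (take t y) = drop j (take t' y)"
    using bifix_code_prefix_eq[OF bc X1 X2] bifix_code_prefix_eq[OF bc X2 X1] by auto
  then have "t = t'" using a b ab by (auto simp: occurrences_def dest: arg_cong[of _ _ length])
  then show "a = b" using ab by simp
qed

text \<open>Both counts equal \<open>|y| + 1\<close> minus the number of occurrences.\<close>
lemma card_unentered_eq_unexited: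
  assumes bc: "bifix_code A X" shows "card (unentered X y) = card (unexited X y)"
proof -
  let ?O = "occurrences X y" and ?P = "{0..length y}"
  have "unentered X y = ?P - snd ` ?O" "snd ` ?O \<subseteq> ?P"
    by (auto simp: unentered_def occurrences_def image_iff)
  then have "card (unentered X y) = card ?P - card ?O"
    using inj_on_end_occurrences[OF bc]
    by (simp add: card_Diff_subset[OF finite_imageI[OF finite_occurrences]] card_image)
  moreover have "unexited X y = ?P - fst ` ?O" "fst ` ?O \<subseteq> ?P"
    by (auto simp: unexited_def occurrences_def image_iff)
  then have "card (unexited X y) = card ?P - card ?O"
    using inj_on_start_occurrences[OF bc]
    by (simp add: card_Diff_subset[OF finite_imageI[OF finite_occurrences]] card_image)
  ultimately show ?thesis by simp
qed

lemma star_words_prefix_unique: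
  assumes bc: "bifix_code A X"
  shows "set ws1 \<subseteq> X \<Longrightarrow> set ws2 \<subseteq> X \<Longrightarrow> concat ws1 @ u1 = concat ws2 @ u2
    \<Longrightarrow> (\<forall>p. prefix p u1 \<longrightarrow> p \<notin> X) \<Longrightarrow> (\<forall>p. prefix p u2 \<longrightarrow> p \<notin> X)
    \<Longrightarrow> concat ws1 = concat ws2"
proof (induction ws1 arbitrary: ws2)
  case Nil
  then show ?case by (cases ws2) (auto simp: prefix_def)
next
  case (Cons a ws1)
  show ?case
  proof (cases ws2)
    case Nil
    then show ?thesis using Cons.prems by (auto simp: prefix_def)
  next
    case (Cons b ws2')
    have aX: "a \<in> X" and bX: "b \<in> X" using Cons Cons.prems by auto
    have e: "a @ (concat ws1 @ u1) = b @ (concat ws2' @ u2)" using Cons.prems(3) Cons by simp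
    then have "prefix a b \<or> prefix b a" by (metis prefixI prefix_same_cases)
    then have ab: "a = b" using bifix_code_prefix_eq[OF bc aX bX] bifix_code_prefix_eq[OF bc bX aX] by auto
    then have "concat ws1 = concat ws2'" using e Cons.IH[of ws2'] Cons.prems Cons by auto
    then show ?thesis using ab Cons by simp
  qed
qed

text \<open>A parse \<open>(v, z, u)\<close> of \<open>y\<close> is determined by \<open>|v|\<close>, which is an unentered position since \<open>v\<close>
  has no suffix in \<open>X\<close>.\<close>
lemma delta_le_card_unentered:
  assumes bc: "bifix_code A X" shows "delta X y \<le> card (unentered X y)"
proof -
  let ?f = "\<lambda>(v::'a list, z::'a list, u::'a list). length v"
  have "inj_on ?f (parses X y)"
  proof (rule inj_onI)
    fix a b assume a: "a \<in> parses X y" and b: "b \<in> parses X y" and e: "?f a = ?f b"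
    obtain v z u v' z' u' where ab: "a = (v, z, u)" "b = (v', z', u')" by (metis prod.collapse)
    have "y = v @ z @ u" and "y = v' @ z' @ u'" using a b ab by (auto simp: parses_def)
    moreover have "length v = length v'" using e ab by simp
    ultimately have vv: "v = v'" and zu: "z @ u = z' @ u'" by (metis append_eq_append_conv)+
    obtain ws1 ws2 where "z = concat ws1" "set ws1 \<subseteq> X" "z' = concat ws2" "set ws2 \<subseteq> X"
      using a b ab by (auto simp: parses_def star_words_def)
    then have "z = z'" using star_words_prefix_unique[OF bc, of ws1 ws2 u u'] zu a b ab
      by (auto simp: parses_def)
    then show "a = b" using ab vv zu by simp
  qed
  moreover have "?f ` parses X y \<subseteq> unentered X y"
    by (auto simp: parses_def unentered_def suffix_drop)
  moreover have "finite (unentered X y)"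
    by (rule finite_subset[of _ "{0..length y}"]) (auto simp: unentered_def)
  ultimately show ?thesis unfolding delta_def by (rule card_inj_on_le)
qed

lemma card_unexited_shift_le:
  "card (unexited X y) \<le> card (unexited X (u @ y))"
proof -
  have "(\<lambda>q. q + length u) ` unexited X y \<subseteq> unexited X (u @ y)"
  proof (rule image_subsetI)
    fix q assume q: "q \<in> unexited X y"
    have "drop (q + length u) (take t (u @ y)) = drop q (take (t - length u) y)"
      if "q + length u < t" for t
      using that by simp
    then show "q + length u \<in> unexited X (u @ y)"
      using q unfolding unexited_def by (auto dest!: spec[of _ "_ - length u"])
  qed
  moreover have "finite (unexited X (u @ y))"
    by (rule finite_subset[of _ "{0..length (u @ y)}"]) (auto simp: unexited_def)
  ultimately show ?thesis by (intro card_inj_on_le) (auto simp: inj_on_def)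
qed

text \<open>In a thin maximal bifix code with forbidden factor \<open>w\<close>, any word has at most \<open>|w| + 1\<close>
  unentered positions: in \<open>w y\<close> every position beyond \<open>w\<close> is entered by the key property,
  and unentered positions are equinumerous with unexited ones, which only grow under
  prepending \<open>w\<close>.\<close>
lemma card_unentered_le:
  assumes mb: "maximal_bifix_code A X" and w: "\<forall>z\<in>X. \<not> sublist w z" "w \<noteq> []"
    and wA: "w \<in> lists A" and yA: "y \<in> lists A"
  shows "card (unentered X y) \<le> Suc (length w)"
proof -
  have bc: "bifix_code A X" using mb by (simp add: maximal_bifix_code_def)
  have "unentered X (w @ y) \<subseteq> {0..length w}"
  proof
    fix p assume p: "p \<in> unentered X (w @ y)"
    show "p \<in> {0..length w}"
    proof (rule ccontr)
      assume "p \<notin> {0..length w}"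
      then have tk: "take p (w @ y) = w @ take (p - length w) y" and pl: "length w < p" by auto
      have "take p (w @ y) \<in> lists A" unfolding tk using wA yA
        by (auto simp: in_lists_conv_set dest: in_set_takeD)
      moreover have "sublist w (take p (w @ y))" unfolding tk by simp
      ultimately obtain s where s: "suffix s (take p (w @ y))" "s \<in> X"
        using forbidden_factor_suffix[OF mb w] by blast
      have "s \<noteq> []" using s(2) bc by (auto simp: bifix_code_def)
      then have "p - length s < p" using pl by simp
      moreover obtain zs where "take p (w @ y) = zs @ s" using s(1) by (auto simp: suffix_def)
      moreover have "length (take p (w @ y)) = p" using p unfolding unentered_def by auto
      ultimately have "drop (p - length s) (take p (w @ y)) = s"
        by (metis append_eq_conv_conj length_append add_diff_cancel_right')
      then show False using \<open>p - length s < p\<close> p s(2) unfolding unentered_def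
        by (metis (no_types, lifting) mem_Collect_eq)
    qed
  qed
  then have "card (unentered X (w @ y)) \<le> Suc (length w)"
    using card_mono[of "{0..length w}"] by fastforce
  then show ?thesis
    using card_unexited_shift_le[of X y w] card_unentered_eq_unexited[OF bc] by simp
qed

section \<open>Branching nodes of prefix codes\<close>

definition prefix_free :: "'a list set \<Rightarrow> bool" where
  "prefix_free S \<longleftrightarrow> (\<forall>s1\<in>S. \<forall>s2\<in>S. prefix s1 s2 \<longrightarrow> s1 = s2)"

definition branch_node :: "'a list set \<Rightarrow> 'a list \<Rightarrow> bool" where
  "branch_node S b \<longleftrightarrow>
     (\<exists>s1\<in>S. \<exists>s2\<in>S. \<exists>c1 c2. c1 \<noteq> c2 \<and> prefix (b @ [c1]) s1 \<and> prefix (b @ [c2]) s2)"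

definition prune :: "'a list set \<Rightarrow> 'a list \<Rightarrow> 'a list set" where
  "prune S b = insert b {s\<in>S. \<not> prefix b s}"

text \<open>Pruning at a branching node removes at least two words and adds one.\<close>
lemma card_prune:
  assumes "finite S" "branch_node S b" shows "card (prune S b) + 1 \<le> card S"
proof -
  let ?U = "{s\<in>S. prefix b s}"
  obtain s1 s2 c1 c2 where s: "s1 \<in> S" "s2 \<in> S" "c1 \<noteq> c2" "prefix (b @ [c1]) s1" "prefix (b @ [c2]) s2"
    using assms(2) unfolding branch_node_def by blast
  have "s1 \<noteq> s2" using s prefix_same_cases by fastforce
  moreover have "{s1, s2} \<subseteq> ?U" using s by (auto dest: append_prefixD)
  ultimately have "2 \<le> card ?U"
    using assms(1) by (metis (no_types, lifting) card_2_iff card_mono finite_subset mem_Collect_eq subsetI)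
  moreover have "prune S b = insert b (S - ?U)" unfolding prune_def by auto
  then have "card (prune S b) = card (S - ?U) + 1" using assms(1) by simp
  moreover have "card (S - ?U) + card ?U = card S" using assms(1) by (simp add: card_Diff_subset card_mono)
  ultimately show ?thesis by linarith
qed

lemma prefix_free_prune:
  assumes pf: "prefix_free S" and s: "s \<in> S" "prefix b s" shows "prefix_free (prune S b)"
  unfolding prefix_free_def
proof (intro ballI impI)
  fix u v assume u: "u \<in> prune S b" and v: "v \<in> prune S b" and uv: "prefix u v"
  show "u = v"
  proof (cases "u = b")
    case True then show ?thesis using v uv unfolding prune_def by auto
  next
    case False
    then have uS: "u \<in> S" "\<not> prefix b u" using u unfolding prune_def by auto
    show ?thesis
    proof (cases "v = b")
      case True
      then have "u = s" using pf uS s uv unfolding prefix_free_def by (metis prefix_order.trans)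
      then show ?thesis using uS s by simp
    next
      case False
      then show ?thesis using pf uS v uv unfolding prefix_free_def prune_def by auto
    qed
  qed
qed

lemma branch_node_prune:
  assumes br: "branch_node S b'" and nb: "\<not> prefix b b'" shows "branch_node (prune S b) b'"
proof -
  have keep: "\<exists>t\<in>prune S b. prefix (b' @ [c]) t" if s: "s \<in> S" "prefix (b' @ [c]) s" for s c
  proof (cases "prefix b s")
    case False then show ?thesis using s unfolding prune_def by auto
  next
    case True
    then have "prefix (b' @ [c]) b \<or> prefix b (b' @ [c])" using s(2) prefix_same_cases by blast
    then have "prefix (b' @ [c]) b" using nb by (auto simp: prefix_snoc)
    then show ?thesis unfolding prune_def by auto
  qed
  obtain s1 s2 c1 c2 where "s1 \<in> S" "s2 \<in> S" "c1 \<noteq> c2" "prefix (b' @ [c1]) s1" "prefix (b' @ [c2]) s2"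
    using br unfolding branch_node_def by blast
  then show ?thesis unfolding branch_node_def using keep by meson
qed

text \<open>A finite nonempty prefix-free set of words, viewed as the leaves of a tree, has more
  leaves than the tree has branching nodes.\<close>
lemma card_branch_nodes:
  "finite B \<Longrightarrow> finite S \<Longrightarrow> S \<noteq> {} \<Longrightarrow> prefix_free S \<Longrightarrow> \<forall>b\<in>B. branch_node S b
   \<Longrightarrow> card B + 1 \<le> card S"
proof (induction "card B" arbitrary: B S)
  case 0
  then show ?case by (simp add: Suc_leI card_gt_0_iff)
next
  case (Suc n)
  have "B \<noteq> {}" using Suc.hyps(2) by auto
  then obtain b where b: "b \<in> B" "length b = Max (length ` B)"
    using Max_in[of "length ` B"] Suc.prems(1) by (metis finite_imageI image_iff image_is_empty)
  have longest: "\<not> prefix b b'" if "b' \<in> B - {b}" for b'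
  proof
    assume "prefix b b'"
    moreover have "length b' \<le> length b" using b(2) that Suc.prems(1) by simp
    ultimately show False using that by (metis DiffE insertI1 prefix_length_le prefix_order.eq_iff
        prefix_length_prefix le_antisym)
  qed
  obtain s where s: "s \<in> S" "prefix b s"
    using Suc.prems(5) b(1) unfolding branch_node_def by (blast dest: append_prefixD)
  have "card (B - {b}) + 1 \<le> card (prune S b)"
  proof (rule Suc.hyps(1))
    show "n = card (B - {b})" using Suc.hyps(2) b(1) Suc.prems(1) by simp
    show "\<forall>b'\<in>B - {b}. branch_node (prune S b) b'"
      using Suc.prems(5) longest branch_node_prune by blast
  qed (use Suc.prems prefix_free_prune[OF _ s] in \<open>auto simp: prune_def\<close>)
  moreover have "card (prune S b) + 1 \<le> card S" using card_prune Suc.prems(2,5) b(1) by blast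
  ultimately show ?case using b(1) Suc.hyps(2) Suc.prems(1) by simp
qed

section \<open>Segments of infinite words\<close>

definition seg :: "(nat \<Rightarrow> 'a) \<Rightarrow> nat \<Rightarrow> nat \<Rightarrow> 'a list" where
  "seg x i j = map x [i..<j]"

lemma length_seg [simp]: "length (seg x i j) = j - i"
  by (simp add: seg_def)

lemma nth_seg [simp]: "k < j - i \<Longrightarrow> seg x i j ! k = x (i + k)"
  by (simp add: seg_def)

lemma take_seg: "take m (seg x i j) = seg x i (min j (i + m))"
  unfolding seg_def take_map by (cases "i + m \<le> j") (auto simp: min_def)

lemma drop_seg: "drop m (seg x i j) = seg x (i + m) j"
  by (simp add: seg_def drop_map)

lemma seg_snoc: "i \<le> j \<Longrightarrow> seg x i (Suc j) = seg x i j @ [x j]"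
  by (simp add: seg_def)

lemma prefix_seg: "m \<le> p \<Longrightarrow> prefix (seg x j m) (seg x j p)"
proof (cases "m \<le> j")
  case True then show ?thesis by (simp add: seg_def)
next
  case False
  assume "m \<le> p"
  then have "seg x j m = take (m - j) (seg x j p)" using False by (simp add: take_seg min_def)
  then show ?thesis by (metis take_is_prefix)
qed

lemma suffix_seg: "j \<le> j' \<Longrightarrow> suffix (seg x j' p) (seg x j p)"
  by (metis drop_seg le_add_diff_inverse suffix_drop)

lemma seg_eqI:
  "j - i = j' - i' \<Longrightarrow> (\<And>k. k < j - i \<Longrightarrow> x (i + k) = x (i' + k)) \<Longrightarrow> seg x i j = seg x i' j'"
  by (rule nth_equalityI) auto

lemma seg_in_factors: "i \<le> j \<Longrightarrow> seg x i j \<in> factors x"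
  unfolding factors_def seg_def by (intro CollectI exI[of _ i] exI[of _ "j - i"]) simp

lemma seg_shift: "seg (\<lambda>k. x (k + N)) i j = seg x (i + N) (j + N)"
  by (rule nth_equalityI) (auto simp: add_ac)

lemma not_ultimately_periodic_fork:
  assumes finA: "finite A" and xA: "\<forall>i. x i \<in> A" and nup: "\<not> ultimately_periodic x"
  shows "\<exists>q q'. N \<le> q \<and> N \<le> q' \<and> seg x q (q + L) = seg x q' (q' + L) \<and> x (q + L) \<noteq> x (q' + L)"
proof (rule ccontr)
  assume no_fork: "\<not> ?thesis"
  have extend: "seg x q (Suc (q + L)) = seg x q' (Suc (q' + L))"
    if "N \<le> q" "N \<le> q'" "seg x q (q + L) = seg x q' (q' + L)" for q q'
  proof -
    have "x (q + L) = x (q' + L)" using no_fork that by blast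
    then show ?thesis using that(3) by (simp add: seg_snoc)
  qed
  have "(\<lambda>q. seg x q (q + L)) ` {N..} \<subseteq> {u. set u \<subseteq> A \<and> length u = L}"
    using xA by (auto simp: seg_def)
  then have "finite ((\<lambda>q. seg x q (q + L)) ` {N..})"
    using finite_lists_length_eq[OF finA] by (rule finite_subset)
  then have "\<not> inj_on (\<lambda>q. seg x q (q + L)) {N..}"
    using finite_imageD infinite_Ici by blast
  then obtain q q' where qq: "N \<le> q" "N \<le> q'" "q \<noteq> q'" "seg x q (q + L) = seg x q' (q' + L)"
    unfolding inj_on_def by auto
  obtain a b where ab: "N \<le> a" "a < b" "seg x a (a + L) = seg x b (b + L)"
  proof (cases "q < q'")
    case True then show ?thesis using qq that by blast
  next
    case False then show ?thesis using qq that[of q' q] by simp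
  qed
  text \<open>Without a fork, equal windows at \<open>a\<close> and \<open>b\<close> stay equal when shifted, so \<open>b - a\<close> is an
    eventual period.\<close>
  have same: "seg x (a + k) (Suc (a + k + L)) = seg x (b + k) (Suc (b + k + L))" for k
  proof (induction k)
    case 0 show ?case using extend[OF _ _ ab(3)] ab(1,2) by simp
  next
    case (Suc k)
    have "seg x (a + Suc k) (a + Suc k + L) = drop 1 (seg x (a + k) (Suc (a + k + L)))"
      by (simp add: drop_seg)
    also have "\<dots> = drop 1 (seg x (b + k) (Suc (b + k + L)))" using Suc.IH by (rule arg_cong)
    also have "\<dots> = seg x (b + Suc k) (b + Suc k + L)" by (simp add: drop_seg)
    finally have "seg x (a + Suc k) (a + Suc k + L) = seg x (b + Suc k) (b + Suc k + L)" .
    from extend[OF _ _ this] show ?case using ab(1,2) by simp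
  qed
  have "x (i + (b - a)) = x i" if "a \<le> i" for i
  proof -
    have "seg x (a + (i - a)) (Suc (a + (i - a) + L)) ! 0 = seg x (b + (i - a)) (Suc (b + (i - a) + L)) ! 0"
      by (simp only: same)
    then show ?thesis using that ab(2) by (simp add: add.commute)
  qed
  then have "ultimately_periodic x"
    unfolding ultimately_periodic_def using ab(2) by (intro exI[of _ "b - a"] conjI exI[of _ a]) auto
  then show False using nup by simp
qed

lemma degF_le_from_tail:
  assumes st: "X_stable X x" and bound: "\<And>i n. N \<le> i \<Longrightarrow> delta X (seg x i (i + n)) \<le> M"
  shows "degF X x \<le> enat M"
proof -
  have "degF X x = degF X (\<lambda>k. x (k + N))" using st unfolding X_stable_def by metis
  also have "\<dots> \<le> enat M"
    unfolding degF_def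
  proof (rule SUP_least)
    fix u assume "u \<in> factors (\<lambda>k. x (k + N))"
    then obtain i n where "u = seg (\<lambda>k. x (k + N)) i (i + n)" by (auto simp: factors_def seg_def)
    then have "u = seg x (i + N) (i + N + n)" by (simp add: seg_shift add_ac)
    then show "enat (delta X u) \<le> enat M" using bound[of "i + N" n] by simp
  qed
  finally show ?thesis .
qed

section \<open>The arc structure of an infinite word\<close>

locale bifix_arcs =
  fixes A :: "'a set" and X :: "'a list set" and x :: "nat \<Rightarrow> 'a"
  assumes bifix: "bifix_code A X"
begin

definition arc :: "nat \<Rightarrow> nat \<Rightarrow> bool" where
  "arc j p \<longleftrightarrow> j < p \<and> seg x j p \<in> X"

text \<open>Since \<open>X\<close> is a suffix code, at most one arc enters each position; since it is a prefix code,
  at most one arc leaves each position.\<close>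
lemma arc_unique_start:
  assumes "arc j p" "arc j' p" shows "j = j'"
proof -
  have "suffix (seg x j p) (seg x j' p) \<or> suffix (seg x j' p) (seg x j p)"
    using suffix_seg nat_le_linear by blast
  then have "seg x j p = seg x j' p"
    using assms bifix_code_suffix_eq[OF bifix] unfolding arc_def by (metis)
  then have "p - j = p - j'" by (metis length_seg)
  then show ?thesis using assms unfolding arc_def by linarith
qed

lemma arc_unique_end:
  assumes "arc j p" "arc j p'" shows "p = p'"
proof -
  have "prefix (seg x j p) (seg x j p') \<or> prefix (seg x j p') (seg x j p)"
    using prefix_seg nat_le_linear by blast
  then have "seg x j p = seg x j p'"
    using assms bifix_code_prefix_eq[OF bifix] unfolding arc_def by (metis)
  then have "p - j = p' - j" by (metis length_seg)
  then show ?thesis using assms unfolding arc_def by linarith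
qed

definition crossing :: "nat \<Rightarrow> nat set" where
  "crossing i = {j. j < i \<and> (\<exists>p\<ge>i. arc j p)}"

lemma finite_crossing: "finite (crossing i)"
  by (rule finite_subset[of _ "{..<i}"]) (auto simp: crossing_def)

lemma unentered_seg:
  "unentered X (seg x i (i + n)) = {p. p \<le> n \<and> \<not> (\<exists>j<p. arc (i + j) (i + p))}"
  unfolding unentered_def arc_def by (auto simp: take_seg drop_seg min_def)

lemma unentered_prefix: "unentered X (seg x 0 n) = {p. p \<le> n \<and> \<not> (\<exists>j<p. arc j p)}"
  using unentered_seg[of 0 n] by simp

text \<open>In a thin maximal bifix code, all but finitely many positions of an infinite word are
  entered by an arc, because every prefix has a bounded number of unentered positions.\<close>
lemma eventually_entered:
  assumes mb: "maximal_bifix_code A X" and th: "thin A X" and xA: "\<forall>i. x i \<in> A"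
  obtains N where "\<forall>p\<ge>N. \<exists>j<p. arc j p"
proof -
  obtain w where wA: "w \<in> lists A" and w: "\<forall>z\<in>X. \<not> sublist w z" using th by (auto simp: thin_def)
  have wne: "w \<noteq> []" using w maximal_bifix_code_nonempty[OF mb xA[rule_format]] by auto
  let ?E = "{p. \<not> (\<exists>j<p. arc j p)}"
  have "card G \<le> Suc (length w)" if G: "G \<subseteq> ?E" "finite G" for G
  proof -
    have "seg x 0 n \<in> lists A" for n using xA by (auto simp: seg_def)
    then have "card (unentered X (seg x 0 (Max G))) \<le> Suc (length w)"
      using card_unentered_le[OF mb w wne wA] by blast
    moreover have "G \<subseteq> unentered X (seg x 0 (Max G))"
      unfolding unentered_prefix using G by auto
    moreover have "finite (unentered X (seg x 0 (Max G)))"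
      unfolding unentered_prefix by (rule finite_subset[of _ "{..Max G}"]) auto
    ultimately show ?thesis by (meson card_mono le_trans)
  qed
  then have "finite ?E" using finite_if_finite_subsets_card_bdd by blast
  then obtain k where k: "\<forall>p\<in>?E. p \<le> k" using finite_nat_set_iff_bounded_le by blast
  have "\<exists>j<p. arc j p" if "Suc k \<le> p" for p
  proof (rule ccontr)
    assume "\<not> (\<exists>j<p. arc j p)"
    then have "p \<le> k" using k by blast
    then show False using that by simp
  qed
  then show ?thesis using that by blast
qed

text \<open>Passing from position \<open>i\<close> to \<open>i + 1\<close>, the arc entering \<open>i\<close> stops crossing and the arc
  leaving \<open>i\<close> (if any) starts crossing.\<close>
lemma card_crossing_Suc:
  assumes j0: "arc j0 i"
  shows "card (crossing (Suc i)) + 1 = card (crossing i) + (if \<exists>p. arc i p then 1 else 0)"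
proof -
  define D where "D = {j. j < i \<and> (\<exists>p\<ge>Suc i. arc j p)}"
  have finD: "finite D" by (rule finite_subset[of _ "{..<i}"]) (auto simp: D_def)
  have "crossing i = insert j0 D"
  proof
    show "crossing i \<subseteq> insert j0 D"
    proof
      fix j assume "j \<in> crossing i"
      then obtain p where p: "j < i" "i \<le> p" "arc j p" by (auto simp: crossing_def)
      show "j \<in> insert j0 D"
      proof (cases "p = i")
        case True then show ?thesis using arc_unique_start[OF j0] p(3) by simp
      next
        case False then show ?thesis using p by (auto simp: D_def)
      qed
    qed
    show "insert j0 D \<subseteq> crossing i"
      using j0 by (auto simp: crossing_def D_def arc_def intro: Suc_leD)
  qed
  moreover have "j0 \<notin> D"
  proof
    assume "j0 \<in> D"
    then obtain p where "Suc i \<le> p" "arc j0 p" by (auto simp: D_def)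
    then show False using arc_unique_end[OF j0] by fastforce
  qed
  moreover have "crossing (Suc i) = (if \<exists>p. arc i p then insert i D else D)"
    by (auto simp: crossing_def D_def arc_def less_Suc_eq Suc_le_eq)
  moreover have "i \<notin> D" by (simp add: D_def)
  ultimately show ?thesis using finD by simp
qed

text \<open>Once every position is entered, the number of crossing arcs is non-increasing; it is
  therefore eventually constant, and from then on every position is also left by an arc.\<close>
lemma crossing_stabilizes:
  assumes entered: "\<forall>p\<ge>N0. \<exists>j<p. arc j p"
  obtains N M where "N0 \<le> N" "\<forall>i\<ge>N. card (crossing i) = M" "\<forall>i\<ge>N. \<exists>p. arc i p"
proof -
  have change: "card (crossing (Suc i)) + 1 = card (crossing i) + (if \<exists>p. arc i p then 1 else 0)"
    if "N0 \<le> i" for i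
    using entered that card_crossing_Suc by blast
  obtain N where N: "N0 \<le> N" "\<forall>i\<ge>N0. card (crossing N) \<le> card (crossing i)"
    using ex_has_least_nat[of "\<lambda>i. N0 \<le> i" N0 "\<lambda>i. card (crossing i)"] by auto
  have "card (crossing i) \<le> card (crossing N)" if "N \<le> i" for i
    using that
  proof (induction i rule: dec_induct)
    case (step k) then show ?case using change[of k] N(1) by (auto split: if_splits)
  qed simp
  then have const: "card (crossing i) = card (crossing N)" if "N \<le> i" for i
    using N that by (meson le_antisym le_trans)
  have "\<exists>p. arc i p" if "N \<le> i" for i
    using change[of i] const[of i] const[of "Suc i"] N(1) that by (auto split: if_splits)
  then show ?thesis using that N(1) const by blast
qed

text \<open>Where every position is entered, each unentered position of a factor starting at \<open>i\<close>
  is entered by a distinct arc crossing \<open>i\<close>; hence \<open>\<delta>\<^sub>X\<close> of the factor is at most the number of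
  arcs crossing \<open>i\<close>.\<close>
lemma delta_seg_le_crossing:
  assumes entered: "\<forall>p\<ge>i. \<exists>j<p. arc j p"
  shows "delta X (seg x i (i + n)) \<le> card (crossing i)"
proof -
  obtain src where src: "\<And>p. i \<le> p \<Longrightarrow> arc (src p) p" using entered by metis
  have "card (unentered X (seg x i (i + n))) \<le> card (crossing i)"
  proof (rule card_inj_on_le[where f = "\<lambda>p. src (i + p)"])
    show "inj_on (\<lambda>p. src (i + p)) (unentered X (seg x i (i + n)))"
    proof (rule inj_onI)
      fix p1 p2 assume "src (i + p1) = src (i + p2)"
      moreover have "arc (src (i + p1)) (i + p1)" "arc (src (i + p2)) (i + p2)" using src by simp_all
      ultimately have "arc (src (i + p1)) (i + p1)" "arc (src (i + p1)) (i + p2)" by simp_all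
      then show "p1 = p2" using arc_unique_end by fastforce
    qed
    show "(\<lambda>p. src (i + p)) ` unentered X (seg x i (i + n)) \<subseteq> crossing i"
    proof (rule image_subsetI)
      fix p assume "p \<in> unentered X (seg x i (i + n))"
      then have none: "\<not> (\<exists>j<p. arc (i + j) (i + p))" by (simp add: unentered_seg)
      have a: "arc (src (i + p)) (i + p)" using src by simp
      have "\<not> i \<le> src (i + p)"
      proof
        assume "i \<le> src (i + p)"
        then have "arc (i + (src (i + p) - i)) (i + p)" "src (i + p) - i < p"
          using a unfolding arc_def by auto
        then show False using none by blast
      qed
      then show "src (i + p) \<in> crossing i" using a unfolding crossing_def
        by (auto intro!: exI[of _ "i + p"])
    qed
  qed (rule finite_crossing)
  then show ?thesis using delta_le_card_unentered[OF bifix] le_trans by blast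
qed

text \<open>If two equal windows of length \<open>L\<close> at \<open>q\<close> and \<open>q'\<close> are followed by different letters and
  all arcs have length at most \<open>L\<close>, then the arcs crossing \<open>q + L + 1\<close> start inside the first
  window, and each start point determines a branching node of the tree of factors in \<open>X\<close>: one
  branch continues with the letter at \<open>q + L\<close>, the other with the letter at \<open>q' + L\<close>.\<close>
lemma crossing_branch_node:
  assumes short: "\<And>j p. arc j p \<Longrightarrow> p - j \<le> L"
    and out: "\<forall>i\<ge>N. \<exists>p. arc i p"
    and fork: "N \<le> q'" "seg x q (q + L) = seg x q' (q' + L)" "x (q + L) \<noteq> x (q' + L)"
    and j: "j \<in> crossing (Suc (q + L))"
  shows "branch_node (X \<inter> factors x) (seg x j (q + L))"
proof -
  define i i' where "i = q + L" and "i' = q' + L"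
  obtain p where p: "j \<le> i" "Suc i \<le> p" "arc j p" using j unfolding crossing_def i_def by auto
  have jq: "q < j" using short[OF p(3)] p(2) unfolding i_def by simp
  define j' where "j' = q' + (j - q)"
  have letter: "x (j' + k) = x (j + k)" if "k < i - j" for k
  proof -
    have "seg x q (q + L) ! (j - q + k) = seg x q' (q' + L) ! (j - q + k)" using fork(2) by simp
    then show ?thesis using that jq unfolding i_def j'_def by (simp add: add.assoc)
  qed
  have window: "seg x j i = seg x j' i'"
    by (rule seg_eqI) (use letter jq p(1) in \<open>auto simp: i_def i'_def j'_def\<close>)
  have "N \<le> j'" using fork(1) unfolding j'_def by simp
  then obtain p' where p': "arc j' p'" using out by blast
  have "Suc i' \<le> p'"
  proof (rule ccontr)
    assume "\<not> Suc i' \<le> p'"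
    define d where "d = p' - j'"
    have d: "0 < d" "d \<le> i - j" using p' \<open>\<not> Suc i' \<le> p'\<close> jq p(1)
      unfolding d_def arc_def i_def i'_def j'_def by auto
    have "seg x j (j + d) = seg x j' p'"
      by (rule seg_eqI) (use d letter in \<open>auto simp: d_def\<close>)
    then have "arc j (j + d)" using p' d unfolding arc_def by simp
    then show False using arc_unique_end[OF p(3)] d p(2) by simp
  qed
  moreover have "j' \<le> i'" using p(1) unfolding i_def i'_def j'_def by simp
  ultimately have "prefix (seg x j i @ [x i']) (seg x j' p')"
    using window prefix_seg[of "Suc i'" p' x j'] seg_snoc[of j' i' x] by simp
  moreover have "prefix (seg x j i @ [x i]) (seg x j p)"
    using p(1,2) prefix_seg[of "Suc i" p x j] seg_snoc[of j i x] by simp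
  moreover have "seg x j p \<in> X \<inter> factors x" "seg x j' p' \<in> X \<inter> factors x"
    using p(3) p' unfolding arc_def by (auto intro!: seg_in_factors)
  ultimately show ?thesis unfolding branch_node_def i_def i'_def using fork(3) by blast
qed

lemma card_factors_gt_crossing:
  assumes finA: "finite A" and xA: "\<forall>i. x i \<in> A" and nup: "\<not> ultimately_periodic x"
    and finS: "finite (X \<inter> factors x)"
    and const: "\<forall>i\<ge>N. card (crossing i) = M" and out: "\<forall>i\<ge>N. \<exists>p. arc i p"
  shows "M + 1 \<le> card (X \<inter> factors x)"
proof -
  define S where "S = X \<inter> factors x"
  have arc_in_S: "seg x j p \<in> S" if "arc j p" for j p
    using that unfolding arc_def S_def by (auto intro!: seg_in_factors)
  have "S \<noteq> {}" using out arc_in_S by blast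
  define L where "L = Max (length ` S)"
  have short: "p - j \<le> L" if "arc j p" for j p
    using arc_in_S[OF that] finS unfolding L_def S_def by (metis Max_ge finite_imageI image_eqI length_seg)
  obtain q q' where fork: "N \<le> q" "N \<le> q'" "seg x q (q + L) = seg x q' (q' + L)"
      "x (q + L) \<noteq> x (q' + L)"
    using not_ultimately_periodic_fork[OF finA xA nup] by blast
  define J where "J = crossing (Suc (q + L))"
  have "inj_on (\<lambda>j. seg x j (q + L)) J"
    by (rule inj_onI) (auto simp: J_def crossing_def dest: arg_cong[of _ _ length])
  then have "card ((\<lambda>j. seg x j (q + L)) ` J) = M"
    using const fork(1) unfolding J_def by (simp add: card_image)
  moreover have "\<forall>b\<in>(\<lambda>j. seg x j (q + L)) ` J. branch_node S b"
    using crossing_branch_node[OF short out fork(2-4)] unfolding J_def S_def by blast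
  moreover have "prefix_free S"
    using bifix_code_prefix_eq[OF bifix] unfolding prefix_free_def S_def by blast
  ultimately show ?thesis
    using card_branch_nodes[OF finite_imageI[OF finite_crossing] _ \<open>S \<noteq> {}\<close>] finS
    unfolding J_def S_def by auto
qed

end

theorem mainTheorem13:
  fixes A :: "'a set" and X :: "'a list set" and x :: "nat \<Rightarrow> 'a"
  assumes "finite A"
    and "maximal_bifix_code A X" and "thin A X"
    and "\<forall>i. x i \<in> A"
    and "X_stable X x"
    and "ecard (X \<inter> factors x) \<le> degF X x"
  shows "ultimately_periodic x"
proof (rule ccontr)
  assume nup: "\<not> ultimately_periodic x"
  interpret bifix_arcs A X x
    using assms(2) by unfold_locales (simp add: maximal_bifix_code_def)
  obtain N0 where entered: "\<forall>p\<ge>N0. \<exists>j<p. arc j p"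
    using eventually_entered assms(2-4) by blast
  obtain N M where N: "N0 \<le> N" "\<forall>i\<ge>N. card (crossing i) = M" "\<forall>i\<ge>N. \<exists>p. arc i p"
    using crossing_stabilizes[OF entered] by blast
  have "delta X (seg x i (i + n)) \<le> M" if "N \<le> i" for i n
  proof -
    have "\<forall>p\<ge>i. \<exists>j<p. arc j p" using entered N(1) that by simp
    then show ?thesis using delta_seg_le_crossing[of i n] N(2) that by simp
  qed
  then have "degF X x \<le> enat M"
    using degF_le_from_tail[OF assms(5)] by blast
  then have card_le: "ecard (X \<inter> factors x) \<le> enat M" using assms(6) by (rule order_trans[rotated])
  then have fin: "finite (X \<inter> factors x)" by (auto simp: ecard_def split: if_splits)
  have "M + 1 \<le> card (X \<inter> factors x)"
    using card_factors_gt_crossing[OF assms(1,4) nup fin N(2,3)] .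
  then show False using card_le fin by (simp add: ecard_def)
qed

end
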